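(* Let $K=\{k_0,k_1,\dots,k_n\}$ be a finite set of social alternatives and $K_*=K\setminus\{k_0\}$. Let $T_1,T_2$ be finite type sets with $\min\{|T_1|,|T_2|\}=2$, let $T=T_1\times T_2$, and let $\lambda$ be a probability measure on $T$ with $\lambda(t)>0$ for all $t\in T$ which is the product of its marginals $\lambda_1$ on $T_1$ and $\lambda_2$ on $T_2$. Let $Q=(Q_1,Q_2)$ with $Q_i:K\times T_i\to\mathbb{R}$ be an interim allocation rule satisfying $\sum_{k\in K}Q_i^k(t_i)=1$ for all $t_i\in T_i$, $i=1,2$ (i.e. $Q_i^{k_0}(t_i)=1-\sum_{k\in K_*}Q_i^k(t_i)$). Then $Q$ is implementable if and only if the following three conditions hold: (a) $\sum_{t_1\in T_1}Q_1^k(t_1)\lambda_1(t_1)-\sum_{t_2\in T_2}Q_2^k(t_2)\lambda_2(t_2)=0$ for all $k\in K_*$; (b) $Q_i^k(t_i)\ge 0$ for all $k\in K_*$, $t_i\in T_i$, $i=1,2$; (c) for all $G\subseteq K_*$, $E_1\subseteq T_1$ and $E_2\subseteq T_2$, $$\sum_{k\in G}\Big[\sum_{t_1\in E_1}Q_1^k(t_1)\lambda_1(t_1)-\sum_{t_2\in E_2}Q_2^k(t_2)\lambda_2(t_2)\Big]\le \lambda\big(E_1\times (T_2\setminus E_2)\big).$$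
   Context: An ex post allocation rule $q:K\times T\to\mathbb{R}$ is feasible if $q\ge 0$ and $\sum_{k\in K}q^k(t)=1$ for all $t\in T$. An interim allocation rule $Q=(Q_1,Q_2)$, $Q_i:K\times T_i\to\mathbb{R}$, is implementable if there exists a feasible ex post allocation rule $q$ with $Q_i^k(t_i)=\sum_{t_{-i}\in T_{-i}}q^k(t)\lambda_{-i}(t_{-i})$ for all $i\in\{1,2\}$, $t_i\in T_i$, $k\in K$ (where $-i$ denotes the other player and $t=(t_i,t_{-i})$). For $E\subseteq T$, $\lambda(E)=\sum_{t\in E}\lambda(t)$. *)

theory Defs
  imports Complex_Main
begin

definition marg1 :: "'b set \<Rightarrow> ('a \<times> 'b \<Rightarrow> real) \<Rightarrow> 'a \<Rightarrow> real" where
  "marg1 T2 lam t1 = (\<Sum>t2\<in>T2. lam (t1, t2))"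

definition marg2 :: "'a set \<Rightarrow> ('a \<times> 'b \<Rightarrow> real) \<Rightarrow> 'b \<Rightarrow> real" where
  "marg2 T1 lam t2 = (\<Sum>t1\<in>T1. lam (t1, t2))"

definition feasible_ex_post ::
  "'k set \<Rightarrow> 'a set \<Rightarrow> 'b set \<Rightarrow> ('k \<Rightarrow> 'a \<times> 'b \<Rightarrow> real) \<Rightarrow> bool" where
  "feasible_ex_post K T1 T2 q \<longleftrightarrow>
     (\<forall>t\<in>T1 \<times> T2. \<forall>k\<in>K. q k t \<ge> 0) \<and> (\<forall>t\<in>T1 \<times> T2. (\<Sum>k\<in>K. q k t) = 1)"

definition implementable ::
  "'k set \<Rightarrow> 'a set \<Rightarrow> 'b set \<Rightarrow> ('a \<times> 'b \<Rightarrow> real) \<Rightarrow>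
   ('k \<Rightarrow> 'a \<Rightarrow> real) \<Rightarrow> ('k \<Rightarrow> 'b \<Rightarrow> real) \<Rightarrow> bool" where
  "implementable K T1 T2 lam Q1 Q2 \<longleftrightarrow>
     (\<exists>q. feasible_ex_post K T1 T2 q \<and>
        (\<forall>k\<in>K. \<forall>t1\<in>T1. Q1 k t1 = (\<Sum>t2\<in>T2. q k (t1, t2) * marg2 T1 lam t2)) \<and>
        (\<forall>k\<in>K. \<forall>t2\<in>T2. Q2 k t2 = (\<Sum>t1\<in>T1. q k (t1, t2) * marg1 T2 lam t1)))"

end

theory Submission
  imports Defs
begin

text \<open>Work with probability masses \<open>m k t = q k t * \<lambda> t\<close> instead of the ex post rule \<open>q\<close>:
  since \<open>\<lambda>\<close> is a positive product measure, \<open>Q\<close> is implementable iff there is a nonnegative \<open>m\<close>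
  with \<open>\<Sum>k. m k t = \<lambda> t\<close> whose two marginals are \<open>Q\<^sub>1 k t\<^sub>1 * \<lambda>\<^sub>1 t\<^sub>1\<close> and
  \<open>Q\<^sub>2 k t\<^sub>2 * \<lambda>\<^sub>2 t\<^sub>2\<close>. Necessity of (a)--(c) is then a matter of adding up masses.
  For sufficiency, (a) and (c) first extend from \<open>K - {k\<^sub>0}\<close> to all of \<open>K\<close>. If
  \<open>T\<^sub>1 = {a, b}\<close> (the case \<open>|T\<^sub>2| = 2\<close> is symmetric), the row \<open>m k (b, t\<^sub>2)\<close> is forced to be
  \<open>Q\<^sub>2 k t\<^sub>2 * \<lambda>\<^sub>2 t\<^sub>2 - m k (a, t\<^sub>2)\<close>, and the row \<open>m k (a, t\<^sub>2)\<close> is a transport plan shipping the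
  supply \<open>\<lambda> (a, t\<^sub>2)\<close> of each \<open>t\<^sub>2\<close> to the demand \<open>Q\<^sub>1 k a * \<lambda>\<^sub>1 a\<close> of each \<open>k\<close> through
  edges of capacity \<open>Q\<^sub>2 k t\<^sub>2 * \<lambda>\<^sub>2 t\<^sub>2\<close>. By Gale's supply--demand theorem such a plan
  exists iff no set of alternatives demands more than can reach it, and this cut condition
  is (c) with \<open>E\<^sub>1 = {a}\<close>.\<close>

section \<open>Gale's supply--demand theorem\<close>

definition cut_capacity :: "'r set \<Rightarrow> ('r \<Rightarrow> real) \<Rightarrow> ('r \<Rightarrow> 'c \<Rightarrow> real) \<Rightarrow> 'c set \<Rightarrow> real" where
  "cut_capacity R s U G = (\<Sum>r\<in>R. min (s r) (sum (U r) G))"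

definition transport_condition ::
  "'r set \<Rightarrow> 'c set \<Rightarrow> ('r \<Rightarrow> real) \<Rightarrow> ('c \<Rightarrow> real) \<Rightarrow> ('r \<Rightarrow> 'c \<Rightarrow> real) \<Rightarrow> bool" where
  "transport_condition R C s d U \<longleftrightarrow>
     (\<forall>r\<in>R. 0 \<le> s r) \<and> (\<forall>c\<in>C. 0 \<le> d c) \<and> (\<forall>r\<in>R. \<forall>c\<in>C. 0 \<le> U r c) \<and>
     sum s R = sum d C \<and> (\<forall>G\<subseteq>C. sum d G \<le> cut_capacity R s U G)"

definition transport_plan ::
  "'r set \<Rightarrow> 'c set \<Rightarrow> ('r \<Rightarrow> real) \<Rightarrow> ('c \<Rightarrow> real) \<Rightarrow> ('r \<Rightarrow> 'c \<Rightarrow> real) \<Rightarrow>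
   ('r \<Rightarrow> 'c \<Rightarrow> real) \<Rightarrow> bool" where
  "transport_plan R C s d U f \<longleftrightarrow>
     (\<forall>r\<in>R. \<forall>c\<in>C. 0 \<le> f r c \<and> f r c \<le> U r c) \<and>
     (\<forall>r\<in>R. sum (f r) C = s r) \<and> (\<forall>c\<in>C. (\<Sum>r\<in>R. f r c) = d c)"

definition transport_reducible ::
  "'r set \<Rightarrow> 'c set \<Rightarrow> ('r \<Rightarrow> real) \<Rightarrow> ('c \<Rightarrow> real) \<Rightarrow> ('r \<Rightarrow> 'c \<Rightarrow> real) \<Rightarrow> bool" where
  "transport_reducible R C s d U \<longleftrightarrow>
     (\<exists>c\<in>C. d c = 0) \<or> (\<exists>G. G \<noteq> {} \<and> G \<subset> C \<and> sum d G = cut_capacity R s U G)"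

lemma transport_condition_remove_zero:
  assumes "finite C" "transport_condition R C s d U" "c \<in> C" "d c = 0"
  shows "transport_condition R (C - {c}) s d U"
  using assms unfolding transport_condition_def by (auto simp: sum_diff1)

lemma transport_plan_insert_zero:
  assumes "finite C" "transport_plan R (C - {c}) s d U f" "c \<in> C" "d c = 0"
    and "\<forall>r\<in>R. 0 \<le> U r c"
  shows "transport_plan R C s d U (\<lambda>r c'. if c' = c then 0 else f r c')"
proof -
  have "(\<Sum>c'\<in>C. if c' = c then 0 else f r c') = sum (f r) (C - {c})" for r
    using assms(1,3) by (simp add: sum.remove)
  moreover have "(\<Sum>r\<in>R. if c' = c then 0 else f r c') = d c'" if "c' \<in> C" for c'
    using assms that unfolding transport_plan_def by (cases "c' = c") auto
  ultimately show ?thesis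
    using assms unfolding transport_plan_def by auto
qed

lemma transport_condition_restrict_tight:
  assumes "finite C" "transport_condition R C s d U" "G \<subseteq> C"
    and tight: "sum d G = cut_capacity R s U G"
  shows "transport_condition R G (\<lambda>r. min (s r) (sum (U r) G)) d U"
proof -
  have U0: "\<forall>r\<in>R. \<forall>c\<in>C. 0 \<le> U r c"
    using assms(2) unfolding transport_condition_def by blast
  have "cut_capacity R (\<lambda>r. min (s r) (sum (U r) G)) U H = cut_capacity R s U H"
    if "H \<subseteq> G" for H
  proof -
    have "min (min (s r) (sum (U r) G)) (sum (U r) H) = min (s r) (sum (U r) H)" if "r \<in> R" for r
    proof -
      have "sum (U r) H \<le> sum (U r) G"
        using that \<open>H \<subseteq> G\<close> U0 assms(1,3) finite_subset by (intro sum_mono2) auto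
      then show ?thesis by (auto simp: min_def)
    qed
    then show ?thesis
      unfolding cut_capacity_def by (intro sum.cong) auto
  qed
  moreover have "0 \<le> min (s r) (sum (U r) G)" if "r \<in> R" for r
    using assms(2,3) U0 that unfolding transport_condition_def by (auto intro!: sum_nonneg)
  ultimately show ?thesis
    using assms unfolding transport_condition_def
    by (auto simp: cut_capacity_def[symmetric])
qed

lemma transport_condition_remove_tight:
  assumes "finite C" "transport_condition R C s d U" "G \<subseteq> C"
    and tight: "sum d G = cut_capacity R s U G"
  shows "transport_condition R (C - G) (\<lambda>r. s r - min (s r) (sum (U r) G)) d U"
proof -
  have U0: "\<forall>r\<in>R. \<forall>c\<in>C. 0 \<le> U r c"
    and cut: "\<And>H. H \<subseteq> C \<Longrightarrow> sum d H \<le> cut_capacity R s U H"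
    using assms(2) unfolding transport_condition_def by blast+
  have fG: "finite G" using assms(1,3) finite_subset by blast
  have "sum d H \<le> (\<Sum>r\<in>R. min (s r - min (s r) (sum (U r) G)) (sum (U r) H))"
    if H: "H \<subseteq> C - G" for H
  proof -
    have fH: "finite H" using H assms(1) finite_subset by blast
    have "sum d H + sum d G = sum d (H \<union> G)"
      using fH fG H by (subst sum.union_disjoint) auto
    also have "\<dots> \<le> (\<Sum>r\<in>R. min (s r) (sum (U r) (H \<union> G)))"
      using cut[of "H \<union> G"] H assms(3) unfolding cut_capacity_def by blast
    also have "\<dots> = (\<Sum>r\<in>R. min (s r) (sum (U r) H + sum (U r) G))"
      using fH fG H by (subst sum.union_disjoint) auto
    finally have "sum d H \<le> (\<Sum>r\<in>R. min (s r) (sum (U r) H + sum (U r) G) - min (s r) (sum (U r) G))"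
      using tight by (simp add: sum_subtractf cut_capacity_def)
    also have "\<dots> \<le> (\<Sum>r\<in>R. min (s r - min (s r) (sum (U r) G)) (sum (U r) H))"
    proof (rule sum_mono)
      fix r assume "r \<in> R"
      then have "0 \<le> sum (U r) H" using U0 H by (intro sum_nonneg) auto
      then show "min (s r) (sum (U r) H + sum (U r) G) - min (s r) (sum (U r) G)
          \<le> min (s r - min (s r) (sum (U r) G)) (sum (U r) H)"
        by (auto simp: min_def)
    qed
    finally show ?thesis .
  qed
  moreover have "(\<Sum>r\<in>R. s r - min (s r) (sum (U r) G)) = sum d (C - G)"
    using assms unfolding transport_condition_def cut_capacity_def
    by (simp add: sum_subtractf sum_diff)
  ultimately show ?thesis
    using assms(2) unfolding transport_condition_def cut_capacity_def by auto
qed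

lemma transport_plan_glue:
  assumes "finite C" "G \<subseteq> C"
    and "transport_plan R G s1 d U f1" "transport_plan R (C - G) s2 d U f2"
    and "\<forall>r\<in>R. s r = s1 r + s2 r"
  shows "transport_plan R C s d U (\<lambda>r c. if c \<in> G then f1 r c else f2 r c)"
proof -
  have "(\<Sum>c\<in>C. if c \<in> G then f1 r c else f2 r c) = sum (f1 r) G + sum (f2 r) (C - G)" for r
    using assms(1,2) by (simp add: sum.If_cases Int_absorb1 Diff_eq)
  moreover have "(\<Sum>r\<in>R. if c \<in> G then f1 r c else f2 r c) = d c" if "c \<in> C" for c
    using assms(3,4) that unfolding transport_plan_def by (cases "c \<in> G") auto
  ultimately show ?thesis
    using assms unfolding transport_plan_def by auto
qed

lemma transport_plan_convex:
  assumes "transport_plan R C s d1 U f1" "transport_plan R C s d2 U f2" "0 \<le> u" "u \<le> 1"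
    and "\<forall>c\<in>C. d c = u * d1 c + (1 - u) * d2 c"
  shows "transport_plan R C s d U (\<lambda>r c. u * f1 r c + (1 - u) * f2 r c)"
proof -
  have "0 \<le> u * f1 r c + (1 - u) * f2 r c \<and> u * f1 r c + (1 - u) * f2 r c \<le> U r c"
    if "r \<in> R" "c \<in> C" for r c
    using assms(1,2) that convex_bound_le[of "f1 r c" "U r c" "f2 r c" u "1 - u"] assms(3,4)
    unfolding transport_plan_def by auto
  moreover have "(\<Sum>c\<in>C. u * f1 r c + (1 - u) * f2 r c) = s r" if "r \<in> R" for r
    using assms(1,2) that
    by (simp add: transport_plan_def sum.distrib flip: sum_distrib_left) (simp add: algebra_simps)
  moreover have "(\<Sum>r\<in>R. u * f1 r c + (1 - u) * f2 r c) = d c" if "c \<in> C" for c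
    using assms(1,2,5) that
    by (simp add: transport_plan_def sum.distrib flip: sum_distrib_left)
  ultimately show ?thesis unfolding transport_plan_def by auto
qed

lemma sum_transfer:
  fixes d :: "'c \<Rightarrow> 'a::ab_group_add"
  assumes "finite G" "a \<noteq> b"
  shows "sum (d(a := d a + t, b := d b - t)) G
    = sum d G + (if a \<in> G then t else 0) - (if b \<in> G then t else 0)"
proof -
  have "d(a := d a + t, b := d b - t) = (\<lambda>c. d c + (if c = a then t else 0) - (if c = b then t else 0))"
    using assms(2) by (auto simp: fun_eq_iff)
  then show ?thesis
    using assms(1) by (simp add: sum.distrib sum_subtractf)
qed

lemma transport_condition_transfer_bounded:
  assumes "finite C" "transport_condition R C s d U" "a \<in> C" "b \<in> C" "a \<noteq> b" "0 \<le> t" "t \<le> d b"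
    and slack: "\<And>G. G \<subseteq> C \<Longrightarrow> a \<in> G \<Longrightarrow> b \<notin> G \<Longrightarrow> t \<le> cut_capacity R s U G - sum d G"
  shows "transport_condition R C s (d(a := d a + t, b := d b - t)) U"
proof -
  let ?d = "d(a := d a + t, b := d b - t)"
  have cut: "\<And>G. G \<subseteq> C \<Longrightarrow> sum d G \<le> cut_capacity R s U G"
    using assms(2) unfolding transport_condition_def by blast
  have sum_d: "sum ?d G = sum d G + (if a \<in> G then t else 0) - (if b \<in> G then t else 0)"
    if "G \<subseteq> C" for G
    using that assms(1,5) finite_subset by (intro sum_transfer) auto
  have "sum ?d G \<le> cut_capacity R s U G" if "G \<subseteq> C" for G
    using sum_d[OF that] cut[OF that] slack[OF that] assms(6) by auto
  moreover have "0 \<le> ?d c" if "c \<in> C" for c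
    using that assms(2,6,7) unfolding transport_condition_def by auto
  moreover have "sum ?d C = sum d C"
    using sum_d[of C] assms(3,4) by simp
  ultimately show ?thesis
    using assms(2) unfolding transport_condition_def by auto
qed

lemma transport_condition_transfer:
  assumes "finite C" "transport_condition R C s d U" "a \<in> C" "b \<in> C" "a \<noteq> b"
  obtains t where "0 \<le> t" "transport_condition R C s (d(a := d a + t, b := d b - t)) U"
    and "transport_reducible R C s (d(a := d a + t, b := d b - t)) U"
proof -
  define F where "F = {G. G \<subseteq> C \<and> a \<in> G \<and> b \<notin> G}"
  define S where "S = insert (d b) ((\<lambda>G. cut_capacity R s U G - sum d G) ` F)"
  define t where "t = Min S"
  let ?d = "d(a := d a + t, b := d b - t)"
  have "finite S"
    using assms(1) unfolding S_def F_def by (auto intro: finite_subset[of _ "Pow C"])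
  then have t_in: "t \<in> S" and t_le: "\<And>x. x \<in> S \<Longrightarrow> t \<le> x"
    unfolding t_def by (rule Min_in, simp add: S_def) (rule Min_le[OF \<open>finite S\<close>])
  have "0 \<le> t"
    using t_in assms(2,4) unfolding S_def F_def transport_condition_def by auto
  moreover have "transport_condition R C s ?d U"
    using assms \<open>0 \<le> t\<close> t_le unfolding S_def F_def
    by (intro transport_condition_transfer_bounded) auto
  moreover have "transport_reducible R C s ?d U"
    unfolding transport_reducible_def
  proof (cases "t = d b")
    case True
    then show "(\<exists>c\<in>C. ?d c = 0) \<or> (\<exists>G. G \<noteq> {} \<and> G \<subset> C \<and> sum ?d G = cut_capacity R s U G)"
      using assms(4) by auto
  next
    case False
    then obtain G where G: "G \<in> F" "t = cut_capacity R s U G - sum d G"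
      using t_in unfolding S_def by auto
    have "finite G" "a \<in> G" "b \<notin> G"
      using G(1) assms(1) finite_subset unfolding F_def by auto
    then have "sum ?d G = sum d G + t"
      by (simp only: sum_transfer[OF \<open>finite G\<close> assms(5)]) simp
    with G(2) have "sum ?d G = cut_capacity R s U G" by simp
    then show "(\<exists>c\<in>C. ?d c = 0) \<or> (\<exists>G. G \<noteq> {} \<and> G \<subset> C \<and> sum ?d G = cut_capacity R s U G)"
      using G(1) assms(4) unfolding F_def by blast
  qed
  ultimately show ?thesis using that by blast
qed

lemma transport_plan_exists_reducible:
  assumes IH: "\<And>C' s d. C' \<subset> C \<Longrightarrow> transport_condition R C' s d U \<Longrightarrow>
      \<exists>f. transport_plan R C' s d U f"
    and "finite C" "transport_condition R C s d U" "transport_reducible R C s d U"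
  shows "\<exists>f. transport_plan R C s d U f"
  using assms(4) unfolding transport_reducible_def
proof
  assume "\<exists>c\<in>C. d c = 0"
  then obtain c where c: "c \<in> C" "d c = 0" by blast
  have "C - {c} \<subset> C" using c by auto
  then obtain f where f: "transport_plan R (C - {c}) s d U f"
    using IH transport_condition_remove_zero[OF assms(2,3) c] by presburger
  have "\<forall>r\<in>R. 0 \<le> U r c"
    using assms(3) c unfolding transport_condition_def by blast
  with transport_plan_insert_zero[OF assms(2) f c] show ?thesis by blast
next
  assume "\<exists>G. G \<noteq> {} \<and> G \<subset> C \<and> sum d G = cut_capacity R s U G"
  then obtain G where G: "G \<noteq> {}" "G \<subset> C" and tight: "sum d G = cut_capacity R s U G"
    by blast
  have "G \<subseteq> C" "C - G \<subset> C" using G by auto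
  obtain f1 where "transport_plan R G (\<lambda>r. min (s r) (sum (U r) G)) d U f1"
    using IH[OF G(2) transport_condition_restrict_tight[OF assms(2,3) \<open>G \<subseteq> C\<close> tight]] by blast
  moreover obtain f2 where "transport_plan R (C - G) (\<lambda>r. s r - min (s r) (sum (U r) G)) d U f2"
    using IH[OF \<open>C - G \<subset> C\<close> transport_condition_remove_tight[OF assms(2,3) \<open>G \<subseteq> C\<close> tight]]
    by blast
  ultimately have "transport_plan R C s d U (\<lambda>r c. if c \<in> G then f1 r c else f2 r c)"
    using \<open>G \<subseteq> C\<close> by (intro transport_plan_glue[OF assms(2)]) auto
  then show ?thesis by blast
qed

lemma cut_capacity_le: "cut_capacity R s U G \<le> sum s R"
  unfolding cut_capacity_def by (intro sum_mono) simp

lemma transport_plan_exists_card_le_1: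
  assumes "finite R" "finite C" "card C \<le> 1" "transport_condition R C s d U"
  shows "\<exists>f. transport_plan R C s d U f"
proof (cases "C = {}")
  case True
  have "\<forall>r\<in>R. 0 \<le> s r" "sum s R = 0"
    using assms(4) True unfolding transport_condition_def by auto
  then have "\<forall>r\<in>R. s r = 0"
    by (simp add: sum_nonneg_eq_0_iff[OF assms(1)])
  then show ?thesis using True unfolding transport_plan_def by auto
next
  case False
  then obtain c where C: "C = {c}"
    using assms(2,3) card_le_Suc0_iff_eq[OF assms(2)] by auto
  have s0: "\<forall>r\<in>R. 0 \<le> s r" and "d c \<le> cut_capacity R s U {c}" and "sum s R = d c"
    using assms(4) unfolding transport_condition_def C by auto
  then have "(\<Sum>r\<in>R. s r - min (s r) (U r c)) = 0"
    using cut_capacity_le[of R s U "{c}"] by (simp add: cut_capacity_def sum_subtractf)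
  moreover have "\<forall>r\<in>R. 0 \<le> s r - min (s r) (U r c)" by simp
  ultimately have "\<forall>r\<in>R. s r - min (s r) (U r c) = 0"
    by (simp add: sum_nonneg_eq_0_iff[OF assms(1)])
  then have "\<forall>r\<in>R. s r \<le> U r c"
    by (auto simp: min_def split: if_splits)
  then have "transport_plan R C s d U (\<lambda>r c. s r)"
    using s0 \<open>sum s R = d c\<close> unfolding transport_plan_def C by auto
  then show ?thesis by blast
qed

lemma transfer_convex_combination:
  fixes d :: "'c \<Rightarrow> real"
  assumes "a \<noteq> b" "0 \<le> t1" "0 \<le> t2"
  obtains u where "0 \<le> u" "u \<le> 1"
    and "\<forall>c. d c = u * (d(a := d a + t1, b := d b - t1)) c + (1 - u) * (d(b := d b + t2, a := d a - t2)) c"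
proof (cases "t1 + t2 = 0")
  case True
  then have "t1 = 0" "t2 = 0" using assms(2,3) by auto
  with that[of 1] show ?thesis by simp
next
  case False
  define u where "u = t2 / (t1 + t2)"
  have "u * t1 = (1 - u) * t2" using False by (simp add: u_def field_simps)
  then have "\<forall>c. d c = u * (d(a := d a + t1, b := d b - t1)) c + (1 - u) * (d(b := d b + t2, a := d a - t2)) c"
    using assms(1) by (auto simp: algebra_simps)
  moreover have "0 \<le> u" "u \<le> 1" using False assms(2,3) by (auto simp: u_def)
  ultimately show ?thesis using that by blast
qed

text \<open>If some demand vanishes or some proper cut is tight, the problem splits into smaller
  ones. Otherwise pick two columns \<open>a \<noteq> b\<close> and shift demand from \<open>b\<close> to \<open>a\<close>, and from \<open>a\<close>
  to \<open>b\<close>, as far as the cut conditions allow: both shifted problems split, and \<open>d\<close> is a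
  convex combination of the two shifted demands.\<close>
theorem transport_plan_exists:
  assumes "finite R" "finite C" "transport_condition R C s d U"
  shows "\<exists>f. transport_plan R C s d U f"
  using assms(2,3)
proof (induction C arbitrary: s d rule: finite_psubset_induct)
  case (psubset C)
  have reducible: "\<exists>f. transport_plan R C s d' U f"
    if "transport_condition R C s d' U" "transport_reducible R C s d' U" for d'
    by (rule transport_plan_exists_reducible[OF _ \<open>finite C\<close> that]) (fact psubset.IH)
  show ?case
  proof (cases "card C \<le> 1")
    case True
    then show ?thesis using transport_plan_exists_card_le_1 assms(1) psubset by blast
  next
    case False
    then obtain a b where ab: "a \<in> C" "b \<in> C" "a \<noteq> b"
      using card_le_Suc0_iff_eq[OF psubset.hyps] by auto
    obtain t1 where t1: "0 \<le> t1"
      and f1: "\<exists>f. transport_plan R C s (d(a := d a + t1, b := d b - t1)) U f"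
      using transport_condition_transfer[OF psubset.hyps psubset.prems ab] reducible by metis
    obtain t2 where t2: "0 \<le> t2"
      and f2: "\<exists>f. transport_plan R C s (d(b := d b + t2, a := d a - t2)) U f"
      using transport_condition_transfer[OF psubset.hyps psubset.prems ab(2,1)] ab(3) reducible by metis
    obtain u where u: "0 \<le> u" "u \<le> 1"
      and "\<forall>c. d c = u * (d(a := d a + t1, b := d b - t1)) c + (1 - u) * (d(b := d b + t2, a := d a - t2)) c"
      by (rule transfer_convex_combination[OF ab(3) t1 t2])
    moreover obtain g1 g2 where
      "transport_plan R C s (d(a := d a + t1, b := d b - t1)) U g1"
      "transport_plan R C s (d(b := d b + t2, a := d a - t2)) U g2"
      using f1 f2 by blast
    ultimately show ?thesis using transport_plan_convex by blast
  qed
qed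

section \<open>Mass plans and the border inequality\<close>

lemma sum_min_eq_split:
  fixes f g :: "'a \<Rightarrow> 'b::{linorder, comm_monoid_add}"
  assumes "finite T"
  obtains S where "S \<subseteq> T" "(\<Sum>t\<in>T. min (f t) (g t)) = sum g S + sum f (T - S)"
proof
  let ?S = "{t \<in> T. g t < f t}"
  have "(\<Sum>t\<in>T. min (f t) (g t)) = (\<Sum>t\<in>T. if g t < f t then g t else f t)"
    by (intro sum.cong) (auto simp: min_def)
  also have "\<dots> = sum g (T \<inter> {t. g t < f t}) + sum f (T \<inter> - {t. g t < f t})"
    using assms by (rule sum.If_cases)
  also have "T \<inter> {t. g t < f t} = ?S" by auto
  also have "T \<inter> - {t. g t < f t} = T - ?S" by auto
  finally show "(\<Sum>t\<in>T. min (f t) (g t)) = sum g ?S + sum f (T - ?S)" .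
qed auto

lemma sum_marg1: "sum (marg1 T2 lam) E1 = sum lam (E1 \<times> T2)"
  unfolding marg1_def by (simp add: sum.cartesian_product)

lemma sum_marg2: "sum (marg2 T1 lam) E2 = sum lam (T1 \<times> E2)"
  unfolding marg2_def by (subst sum.swap) (simp add: sum.cartesian_product)

lemma sum_swap_Times: "sum (lam \<circ> prod.swap) (B \<times> A) = sum lam (A \<times> B)"
proof -
  have "sum lam (prod.swap ` (B \<times> A)) = sum (lam \<circ> prod.swap) (B \<times> A)"
    by (rule sum.reindex) simp
  then show ?thesis by (simp add: product_swap)
qed

lemma marg1_swap: "marg1 T1 (lam \<circ> prod.swap) = marg2 T1 lam"
  by (simp add: fun_eq_iff marg1_def marg2_def)

lemma marg2_swap: "marg2 T2 (lam \<circ> prod.swap) = marg1 T2 lam"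
  by (simp add: fun_eq_iff marg1_def marg2_def)

definition mass_totals ::
  "'k set \<Rightarrow> 'a set \<Rightarrow> 'b set \<Rightarrow> ('a \<times> 'b \<Rightarrow> real) \<Rightarrow>
   ('k \<Rightarrow> 'a \<Rightarrow> real) \<Rightarrow> ('k \<Rightarrow> 'b \<Rightarrow> real) \<Rightarrow> bool" where
  "mass_totals K T1 T2 lam x y \<longleftrightarrow>
     (\<forall>t1\<in>T1. (\<Sum>k\<in>K. x k t1) = marg1 T2 lam t1) \<and> (\<forall>t2\<in>T2. (\<Sum>k\<in>K. y k t2) = marg2 T1 lam t2)"

definition mass_plan ::
  "'k set \<Rightarrow> 'a set \<Rightarrow> 'b set \<Rightarrow> ('a \<times> 'b \<Rightarrow> real) \<Rightarrow>
   ('k \<Rightarrow> 'a \<Rightarrow> real) \<Rightarrow> ('k \<Rightarrow> 'b \<Rightarrow> real) \<Rightarrow> ('k \<Rightarrow> 'a \<times> 'b \<Rightarrow> real) \<Rightarrow> bool" where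
  "mass_plan K T1 T2 lam x y m \<longleftrightarrow>
     (\<forall>k\<in>K. \<forall>t\<in>T1 \<times> T2. 0 \<le> m k t) \<and> (\<forall>t\<in>T1 \<times> T2. (\<Sum>k\<in>K. m k t) = lam t) \<and>
     (\<forall>k\<in>K. \<forall>t1\<in>T1. (\<Sum>t2\<in>T2. m k (t1, t2)) = x k t1) \<and>
     (\<forall>k\<in>K. \<forall>t2\<in>T2. (\<Sum>t1\<in>T1. m k (t1, t2)) = y k t2)"

definition balanced ::
  "'k set \<Rightarrow> 'a set \<Rightarrow> 'b set \<Rightarrow> ('k \<Rightarrow> 'a \<Rightarrow> real) \<Rightarrow> ('k \<Rightarrow> 'b \<Rightarrow> real) \<Rightarrow> bool" where
  "balanced K T1 T2 x y \<longleftrightarrow> (\<forall>k\<in>K. sum (x k) T1 = sum (y k) T2)"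

definition border_ineq ::
  "'k set \<Rightarrow> 'a set \<Rightarrow> 'b set \<Rightarrow> ('a \<times> 'b \<Rightarrow> real) \<Rightarrow>
   ('k \<Rightarrow> 'a \<Rightarrow> real) \<Rightarrow> ('k \<Rightarrow> 'b \<Rightarrow> real) \<Rightarrow> bool" where
  "border_ineq K T1 T2 lam x y \<longleftrightarrow>
     (\<forall>G E1 E2. G \<subseteq> K \<longrightarrow> E1 \<subseteq> T1 \<longrightarrow> E2 \<subseteq> T2 \<longrightarrow>
        (\<Sum>k\<in>G. sum (x k) E1 - sum (y k) E2) \<le> sum lam (E1 \<times> (T2 - E2)))"

lemma border_ineqD:
  "border_ineq K T1 T2 lam x y \<Longrightarrow> G \<subseteq> K \<Longrightarrow> E1 \<subseteq> T1 \<Longrightarrow> E2 \<subseteq> T2 \<Longrightarrow>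
    (\<Sum>k\<in>G. sum (x k) E1 - sum (y k) E2) \<le> sum lam (E1 \<times> (T2 - E2))"
  unfolding border_ineq_def by blast

lemma border_ineq_mono:
  assumes "border_ineq K T1 T2 lam x y" "K' \<subseteq> K"
  shows "border_ineq K' T1 T2 lam x y"
  unfolding border_ineq_def
proof (intro allI impI)
  fix G E1 E2 assume "G \<subseteq> K'" "E1 \<subseteq> T1" "E2 \<subseteq> T2"
  with assms(2) show "(\<Sum>k\<in>G. sum (x k) E1 - sum (y k) E2) \<le> sum lam (E1 \<times> (T2 - E2))"
    by (intro border_ineqD[OF assms(1)]) auto
qed

lemma mass_plan_balanced:
  assumes "mass_plan K T1 T2 lam x y m"
  shows "balanced K T1 T2 x y"
  unfolding balanced_def
proof
  fix k assume "k \<in> K"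
  then have "sum (x k) T1 = (\<Sum>t1\<in>T1. \<Sum>t2\<in>T2. m k (t1, t2))"
    and "sum (y k) T2 = (\<Sum>t2\<in>T2. \<Sum>t1\<in>T1. m k (t1, t2))"
    using assms unfolding mass_plan_def by simp_all
  then show "sum (x k) T1 = sum (y k) T2" by (simp add: sum.swap[of _ T2])
qed

lemma mass_plan_diff_le:
  assumes "finite T1" "finite T2" "mass_plan K T1 T2 lam x y m" "k \<in> K" "E1 \<subseteq> T1" "E2 \<subseteq> T2"
  shows "sum (x k) E1 - sum (y k) E2 \<le> sum (m k) (E1 \<times> (T2 - E2))"
proof -
  have m0: "\<forall>t\<in>T1 \<times> T2. 0 \<le> m k t"
    using assms(3,4) unfolding mass_plan_def by blast
  have fin: "finite E1" "finite E2"
    using assms(1,2,5,6) finite_subset by auto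
  have "sum (x k) E1 = (\<Sum>t1\<in>E1. \<Sum>t2\<in>T2. m k (t1, t2))"
    using assms(3-5) unfolding mass_plan_def by (intro sum.cong) auto
  also have "\<dots> = sum (m k) (E1 \<times> T2)"
    by (simp add: sum.cartesian_product)
  also have "\<dots> = sum (m k) (E1 \<times> (T2 - E2)) + sum (m k) (E1 \<times> E2)"
    using fin assms(2,6) by (subst sum.union_disjoint[symmetric]) (auto intro!: sum.cong)
  also have "sum (m k) (E1 \<times> E2) \<le> sum (m k) (T1 \<times> E2)"
    using assms(1,2,5,6) m0 by (intro sum_mono2) (auto intro: finite_subset)
  also have "sum (m k) (T1 \<times> E2) = (\<Sum>t1\<in>T1. \<Sum>t2\<in>E2. m k (t1, t2))"
    by (simp add: sum.cartesian_product)
  also have "\<dots> = (\<Sum>t2\<in>E2. \<Sum>t1\<in>T1. m k (t1, t2))"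
    by (rule sum.swap)
  also have "\<dots> = sum (y k) E2"
    using assms(3,4,6) unfolding mass_plan_def by (intro sum.cong) auto
  finally show ?thesis by simp
qed

lemma mass_plan_border_ineq:
  assumes "finite K" "finite T1" "finite T2" "mass_plan K T1 T2 lam x y m"
  shows "border_ineq K T1 T2 lam x y"
  unfolding border_ineq_def
proof (intro allI impI)
  fix G E1 E2 assume G: "G \<subseteq> K" and E: "E1 \<subseteq> T1" "E2 \<subseteq> T2"
  have m0: "\<forall>k\<in>K. \<forall>t\<in>T1 \<times> T2. 0 \<le> m k t" and lam: "\<forall>t\<in>T1 \<times> T2. (\<Sum>k\<in>K. m k t) = lam t"
    using assms(4) unfolding mass_plan_def by blast+
  have "(\<Sum>k\<in>G. sum (x k) E1 - sum (y k) E2) \<le> (\<Sum>k\<in>G. sum (m k) (E1 \<times> (T2 - E2)))"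
    using G E by (intro sum_mono mass_plan_diff_le[OF assms(2-4)]) auto
  also have "\<dots> = (\<Sum>t\<in>E1 \<times> (T2 - E2). \<Sum>k\<in>G. m k t)"
    by (rule sum.swap)
  also have "\<dots> \<le> (\<Sum>t\<in>E1 \<times> (T2 - E2). \<Sum>k\<in>K. m k t)"
    using G E m0 assms(1) by (intro sum_mono sum_mono2) auto
  also have "\<dots> = sum lam (E1 \<times> (T2 - E2))"
    using E lam by (intro sum.cong) auto
  finally show "(\<Sum>k\<in>G. sum (x k) E1 - sum (y k) E2) \<le> sum lam (E1 \<times> (T2 - E2))" .
qed

text \<open>Condition (b) is implied by (a) and (c): take \<open>G\<close> a singleton.\<close>
lemma border_ineq_nonneg:
  assumes "finite T1" "finite T2" "balanced K T1 T2 x y" "border_ineq K T1 T2 lam x y" "k \<in> K"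
  shows "\<forall>t1\<in>T1. 0 \<le> x k t1" "\<forall>t2\<in>T2. 0 \<le> y k t2"
proof -
  have border: "sum (x k) E1 - sum (y k) E2 \<le> sum lam (E1 \<times> (T2 - E2))"
    if "E1 \<subseteq> T1" "E2 \<subseteq> T2" for E1 E2
  proof -
    have "{k} \<subseteq> K" using assms(5) by simp
    from border_ineqD[OF assms(4) this that] show ?thesis by simp
  qed
  show "\<forall>t2\<in>T2. 0 \<le> y k t2"
  proof
    fix t2 assume "t2 \<in> T2"
    with border[of "{}" "{t2}"] show "0 \<le> y k t2" by simp
  qed
  show "\<forall>t1\<in>T1. 0 \<le> x k t1"
  proof
    fix t1 assume "t1 \<in> T1"
    then have "sum (x k) (T1 - {t1}) = sum (y k) T2 - x k t1"
      using assms(1,3,5) by (simp add: balanced_def sum_diff1)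
    then show "0 \<le> x k t1"
      using border[of "T1 - {t1}" T2] by simp
  qed
qed

lemma balanced_sum_complement:
  assumes "finite T1" "finite T2" "balanced K T1 T2 x y" "G \<subseteq> K" "E1 \<subseteq> T1" "E2 \<subseteq> T2"
  shows "(\<Sum>k\<in>G. sum (x k) (T1 - E1) - sum (y k) (T2 - E2)) = (\<Sum>k\<in>G. sum (y k) E2 - sum (x k) E1)"
  using assms unfolding balanced_def by (intro sum.cong) (auto simp: sum_diff)

lemma border_ineq_swap:
  assumes "finite T1" "finite T2" "balanced K T1 T2 x y" "border_ineq K T1 T2 lam x y"
  shows "border_ineq K T2 T1 (lam \<circ> prod.swap) y x"
  unfolding border_ineq_def
proof (intro allI impI)
  fix G E2 E1 assume G: "G \<subseteq> K" and E: "E2 \<subseteq> T2" "E1 \<subseteq> T1"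
  have "(\<Sum>k\<in>G. sum (y k) E2 - sum (x k) E1)
      = (\<Sum>k\<in>G. sum (x k) (T1 - E1) - sum (y k) (T2 - E2))"
    using balanced_sum_complement[OF assms(1-3) G E(2,1)] by simp
  also have "\<dots> \<le> sum lam ((T1 - E1) \<times> (T2 - (T2 - E2)))"
    by (rule border_ineqD[OF assms(4) G Diff_subset Diff_subset])
  also have "T2 - (T2 - E2) = E2" using E by auto
  also have "sum lam ((T1 - E1) \<times> E2) = sum (lam \<circ> prod.swap) (E2 \<times> (T1 - E1))"
    by (rule sum_swap_Times[symmetric])
  finally show "(\<Sum>k\<in>G. sum (y k) E2 - sum (x k) E1) \<le> sum (lam \<circ> prod.swap) (E2 \<times> (T1 - E1))" .
qed

lemma mass_totals_sum1:
  assumes "finite K" "mass_totals K T1 T2 lam x y" "E1 \<subseteq> T1"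
  shows "(\<Sum>k\<in>K. sum (x k) E1) = sum lam (E1 \<times> T2)"
  using assms unfolding mass_totals_def
  by (subst sum.swap) (auto simp: sum_marg1[symmetric] intro!: sum.cong)

lemma mass_totals_sum2:
  assumes "finite K" "mass_totals K T1 T2 lam x y" "E2 \<subseteq> T2"
  shows "(\<Sum>k\<in>K. sum (y k) E2) = sum lam (T1 \<times> E2)"
  using assms unfolding mass_totals_def
  by (subst sum.swap) (auto simp: sum_marg2[symmetric] intro!: sum.cong)

lemma sum_Times_border:
  fixes lam :: "'a \<times> 'b \<Rightarrow> 'c::ab_group_add"
  assumes "finite T1" "finite T2" "E1 \<subseteq> T1" "E2 \<subseteq> T2"
  shows "sum lam (E1 \<times> T2) - sum lam (T1 \<times> E2) + sum lam ((T1 - E1) \<times> E2) = sum lam (E1 \<times> (T2 - E2))"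
proof -
  have "finite E1" "finite E2"
    using assms finite_subset by auto
  then have "sum lam (E1 \<times> T2) = sum lam (E1 \<times> T2 - E1 \<times> E2) + sum lam (E1 \<times> E2)"
    and "sum lam (T1 \<times> E2) = sum lam (T1 \<times> E2 - E1 \<times> E2) + sum lam (E1 \<times> E2)"
    using assms by (intro sum.subset_diff; auto)+
  moreover have "E1 \<times> T2 - E1 \<times> E2 = E1 \<times> (T2 - E2)" "T1 \<times> E2 - E1 \<times> E2 = (T1 - E1) \<times> E2"
    by auto
  ultimately show ?thesis by (simp add: algebra_simps)
qed

lemma balanced_extend:
  assumes "finite K" "mass_totals K T1 T2 lam x y" "k0 \<in> K" "balanced (K - {k0}) T1 T2 x y"
  shows "balanced K T1 T2 x y"
proof -
  have "(\<Sum>k\<in>K. sum (x k) T1) = (\<Sum>k\<in>K. sum (y k) T2)"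
    using mass_totals_sum1[OF assms(1,2) order.refl] mass_totals_sum2[OF assms(1,2) order.refl] by simp
  moreover have "(\<Sum>k\<in>K - {k0}. sum (x k) T1) = (\<Sum>k\<in>K - {k0}. sum (y k) T2)"
    using assms(4) unfolding balanced_def by (intro sum.cong) auto
  ultimately have "sum (x k0) T1 = sum (y k0) T2"
    using assms(1,3) by (simp add: sum.remove)
  then show ?thesis
    using assms(4) unfolding balanced_def by blast
qed

text \<open>For \<open>k\<^sub>0 \<in> G\<close>, apply the inequality to \<open>K - G\<close> and the complementary type sets.\<close>
lemma border_ineq_extend:
  assumes "finite K" "finite T1" "finite T2" "mass_totals K T1 T2 lam x y" "balanced K T1 T2 x y"
    and "border_ineq (K - {k0}) T1 T2 lam x y"
  shows "border_ineq K T1 T2 lam x y"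
  unfolding border_ineq_def
proof (intro allI impI)
  fix G E1 E2 assume G: "G \<subseteq> K" and E: "E1 \<subseteq> T1" "E2 \<subseteq> T2"
  let ?\<phi> = "\<lambda>k. sum (x k) E1 - sum (y k) E2"
  show "sum ?\<phi> G \<le> sum lam (E1 \<times> (T2 - E2))"
  proof (cases "k0 \<in> G")
    case False
    with G have "G \<subseteq> K - {k0}" by auto
    from border_ineqD[OF assms(6) this E] show ?thesis .
  next
    case True
    define H where "H = K - G"
    have H: "H \<subseteq> K - {k0}" "H \<subseteq> K" "G = K - H" using G True by (auto simp: H_def)
    have "sum ?\<phi> G = sum ?\<phi> K - sum ?\<phi> H"
      by (simp only: H(3) sum_diff[OF assms(1) H(2)])
    moreover have "sum ?\<phi> K = sum lam (E1 \<times> T2) - sum lam (T1 \<times> E2)"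
      using mass_totals_sum1[OF assms(1,4) E(1)] mass_totals_sum2[OF assms(1,4) E(2)]
      by (simp add: sum_subtractf)
    moreover have "- sum ?\<phi> H = (\<Sum>k\<in>H. sum (x k) (T1 - E1) - sum (y k) (T2 - E2))"
      using balanced_sum_complement[OF assms(2,3,5) H(2) E] by (simp add: sum_subtractf)
    moreover have "\<dots> \<le> sum lam ((T1 - E1) \<times> E2)"
    proof -
      have "T2 - (T2 - E2) = E2" using E(2) by auto
      then show ?thesis
        using border_ineqD[OF assms(6) H(1) Diff_subset[of T1 E1] Diff_subset[of T2 E2]] by simp
    qed
    ultimately show ?thesis
      using sum_Times_border[OF assms(2,3) E, of lam] by linarith
  qed
qed

lemma border_ineq_transport_condition:
  assumes "finite T2" "a \<in> T1" "\<forall>t2\<in>T2. 0 \<le> lam (a, t2)"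
    and "(\<Sum>k\<in>K. x k a) = marg1 T2 lam a" "\<forall>k\<in>K. 0 \<le> x k a" "\<forall>k\<in>K. \<forall>t2\<in>T2. 0 \<le> y k t2"
    and "border_ineq K T1 T2 lam x y"
  shows "transport_condition T2 K (\<lambda>t2. lam (a, t2)) (\<lambda>k. x k a) (\<lambda>t2 k. y k t2)"
proof -
  have "(\<Sum>k\<in>G. x k a) \<le> cut_capacity T2 (\<lambda>t2. lam (a, t2)) (\<lambda>t2 k. y k t2) G" if "G \<subseteq> K" for G
  proof -
    obtain S where S: "S \<subseteq> T2" and cap: "cut_capacity T2 (\<lambda>t2. lam (a, t2)) (\<lambda>t2 k. y k t2) G
        = (\<Sum>t2\<in>S. \<Sum>k\<in>G. y k t2) + (\<Sum>t2\<in>T2 - S. lam (a, t2))"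
      using sum_min_eq_split[OF assms(1), of "\<lambda>t2. lam (a, t2)" "\<lambda>t2. \<Sum>k\<in>G. y k t2"]
      unfolding cut_capacity_def by blast
    have "(\<Sum>k\<in>G. x k a) = (\<Sum>k\<in>G. sum (x k) {a} - sum (y k) S) + (\<Sum>k\<in>G. sum (y k) S)"
      by (simp add: sum_subtractf)
    also have "(\<Sum>k\<in>G. sum (x k) {a} - sum (y k) S) \<le> sum lam ({a} \<times> (T2 - S))"
    proof -
      have "{a} \<subseteq> T1" using assms(2) by simp
      from border_ineqD[OF assms(7) that this S] show ?thesis by simp
    qed
    also have "sum lam ({a} \<times> (T2 - S)) = (\<Sum>t2\<in>T2 - S. lam (a, t2))"
      using sum.cartesian_product[of "\<lambda>t1 t2. lam (t1, t2)" "T2 - S" "{a}"] by simp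
    also have "(\<Sum>k\<in>G. sum (y k) S) = (\<Sum>t2\<in>S. \<Sum>k\<in>G. y k t2)"
      by (rule sum.swap)
    finally show ?thesis
      using cap by simp
  qed
  moreover have "sum (\<lambda>t2. lam (a, t2)) T2 = (\<Sum>k\<in>K. x k a)"
    using assms(4) by (simp add: marg1_def)
  ultimately show ?thesis
    using assms(3,5,6) unfolding transport_condition_def by auto
qed

lemma mass_plan_of_transport_plan:
  assumes "T1 = {a, b}" "a \<noteq> b" "mass_totals K T1 T2 lam x y" "balanced K T1 T2 x y"
    and f: "transport_plan T2 K (\<lambda>t2. lam (a, t2)) (\<lambda>k. x k a) (\<lambda>t2 k. y k t2) f"
  shows "mass_plan K T1 T2 lam x y
    (\<lambda>k t. if fst t = a then f (snd t) k else y k (snd t) - f (snd t) k)"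
proof -
  have f_bounds: "0 \<le> f t2 k" "f t2 k \<le> y k t2" if "t2 \<in> T2" "k \<in> K" for t2 k
    using f that unfolding transport_plan_def by auto
  have f_row: "(\<Sum>k\<in>K. f t2 k) = lam (a, t2)" if "t2 \<in> T2" for t2
    using f that unfolding transport_plan_def by auto
  have f_col: "(\<Sum>t2\<in>T2. f t2 k) = x k a" if "k \<in> K" for k
    using f that unfolding transport_plan_def by auto
  have y_tot: "(\<Sum>k\<in>K. y k t2) = lam (a, t2) + lam (b, t2)" if "t2 \<in> T2" for t2
    using assms(1-3) that unfolding mass_totals_def marg2_def by simp
  have x_bal: "sum (y k) T2 = x k a + x k b" if "k \<in> K" for k
    using assms(1,2,4) that unfolding balanced_def by simp
  let ?m = "\<lambda>k t. if fst t = a then f (snd t) k else y k (snd t) - f (snd t) k"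
  have "0 \<le> ?m k t" if "k \<in> K" "t \<in> T1 \<times> T2" for k t
    using that f_bounds by auto
  moreover have "(\<Sum>k\<in>K. ?m k (t1, t2)) = lam (t1, t2)" if "t1 \<in> T1" "t2 \<in> T2" for t1 t2
    using that assms(1,2) f_row y_tot by (auto simp: sum_subtractf)
  moreover have "(\<Sum>t2\<in>T2. ?m k (t1, t2)) = x k t1" if "k \<in> K" "t1 \<in> T1" for k t1
    using that assms(1,2) f_col x_bal by (auto simp: sum_subtractf)
  moreover have "(\<Sum>t1\<in>T1. ?m k (t1, t2)) = y k t2" for k t2
    using assms(1,2) by simp
  ultimately show ?thesis
    unfolding mass_plan_def by auto
qed

lemma mass_plan_exists_two_point:
  assumes "finite K" "finite T2" "T1 = {a, b}" "a \<noteq> b" "\<forall>t\<in>T1 \<times> T2. 0 \<le> lam t"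
    and "mass_totals K T1 T2 lam x y" "balanced K T1 T2 x y" "border_ineq K T1 T2 lam x y"
  shows "\<exists>m. mass_plan K T1 T2 lam x y m"
proof -
  have "finite T1" "a \<in> T1" using assms(3) by auto
  note nonneg = border_ineq_nonneg[OF \<open>finite T1\<close> assms(2,7,8)]
  have "transport_condition T2 K (\<lambda>t2. lam (a, t2)) (\<lambda>k. x k a) (\<lambda>t2 k. y k t2)"
  proof (rule border_ineq_transport_condition[OF assms(2) \<open>a \<in> T1\<close> _ _ _ _ assms(8)])
    show "\<forall>t2\<in>T2. 0 \<le> lam (a, t2)" using assms(5) \<open>a \<in> T1\<close> by auto
    show "(\<Sum>k\<in>K. x k a) = marg1 T2 lam a" using assms(6) \<open>a \<in> T1\<close> unfolding mass_totals_def by blast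
    show "\<forall>k\<in>K. 0 \<le> x k a" using nonneg(1) \<open>a \<in> T1\<close> by blast
    show "\<forall>k\<in>K. \<forall>t2\<in>T2. 0 \<le> y k t2" using nonneg(2) by blast
  qed
  then obtain f where "transport_plan T2 K (\<lambda>t2. lam (a, t2)) (\<lambda>k. x k a) (\<lambda>t2 k. y k t2) f"
    using transport_plan_exists[OF assms(2,1)] by blast
  then show ?thesis
    using mass_plan_of_transport_plan[OF assms(3,4,6,7)] by blast
qed

lemma mass_totals_swap:
  "mass_totals K T1 T2 lam x y \<Longrightarrow> mass_totals K T2 T1 (lam \<circ> prod.swap) y x"
  by (simp add: mass_totals_def marg1_swap marg2_swap)

lemma balanced_swap: "balanced K T1 T2 x y \<Longrightarrow> balanced K T2 T1 y x"
  by (simp add: balanced_def)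

lemma mass_plan_swap:
  "mass_plan K T2 T1 (lam \<circ> prod.swap) y x m \<Longrightarrow> mass_plan K T1 T2 lam x y (\<lambda>k t. m k (prod.swap t))"
  by (auto simp: mass_plan_def)

theorem mass_plan_exists_iff:
  assumes "finite K" "finite T1" "finite T2" "min (card T1) (card T2) = 2"
    and "\<forall>t\<in>T1 \<times> T2. 0 \<le> lam t" "mass_totals K T1 T2 lam x y"
  shows "(\<exists>m. mass_plan K T1 T2 lam x y m) \<longleftrightarrow> balanced K T1 T2 x y \<and> border_ineq K T1 T2 lam x y"
proof
  assume "\<exists>m. mass_plan K T1 T2 lam x y m"
  then show "balanced K T1 T2 x y \<and> border_ineq K T1 T2 lam x y"
    using mass_plan_balanced mass_plan_border_ineq[OF assms(1-3)] by blast
next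
  assume "balanced K T1 T2 x y \<and> border_ineq K T1 T2 lam x y"
  then have bal: "balanced K T1 T2 x y" and border: "border_ineq K T1 T2 lam x y" by auto
  have "card T1 = 2 \<or> card T2 = 2"
    using assms(4) unfolding min_def by (auto split: if_splits)
  then show "\<exists>m. mass_plan K T1 T2 lam x y m"
  proof
    assume "card T1 = 2"
    then obtain a b where "T1 = {a, b}" "a \<noteq> b" by (meson card_2_iff)
    from mass_plan_exists_two_point[OF assms(1,3) this assms(5,6) bal border] show ?thesis .
  next
    assume "card T2 = 2"
    then obtain a b where ab: "T2 = {a, b}" "a \<noteq> b" by (meson card_2_iff)
    have "\<forall>t\<in>T2 \<times> T1. 0 \<le> (lam \<circ> prod.swap) t" using assms(5) by auto
    from mass_plan_exists_two_point[OF assms(1,2) ab this mass_totals_swap[OF assms(6)]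
        balanced_swap[OF bal] border_ineq_swap[OF assms(2,3) bal border]]
    obtain m where "mass_plan K T2 T1 (lam \<circ> prod.swap) y x m" by blast
    then show ?thesis using mass_plan_swap by blast
  qed
qed

section \<open>Implementable interim rules\<close>

lemma marg1_pos:
  assumes "finite T2" "T2 \<noteq> {}" "\<forall>t\<in>T1 \<times> T2. 0 < lam t" "t1 \<in> T1"
  shows "0 < marg1 T2 lam t1"
  using assms unfolding marg1_def by (intro sum_pos) auto

lemma marg2_pos:
  assumes "finite T1" "T1 \<noteq> {}" "\<forall>t\<in>T1 \<times> T2. 0 < lam t" "t2 \<in> T2"
  shows "0 < marg2 T1 lam t2"
  using assms unfolding marg2_def by (intro sum_pos) auto

lemma interim_mass1:
  assumes "\<forall>t1\<in>T1. \<forall>t2\<in>T2. lam (t1, t2) = marg1 T2 lam t1 * marg2 T1 lam t2" "t1 \<in> T1"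
  shows "(\<Sum>t2\<in>T2. q (t1, t2) * marg2 T1 lam t2) * marg1 T2 lam t1 = (\<Sum>t2\<in>T2. q (t1, t2) * lam (t1, t2))"
  using assms unfolding sum_distrib_right by (intro sum.cong) auto

lemma interim_mass2:
  assumes "\<forall>t1\<in>T1. \<forall>t2\<in>T2. lam (t1, t2) = marg1 T2 lam t1 * marg2 T1 lam t2" "t2 \<in> T2"
  shows "(\<Sum>t1\<in>T1. q (t1, t2) * marg1 T2 lam t1) * marg2 T1 lam t2 = (\<Sum>t1\<in>T1. q (t1, t2) * lam (t1, t2))"
  using assms unfolding sum_distrib_right by (intro sum.cong) auto

lemma implementable_imp_mass_plan:
  assumes lam_pos: "\<forall>t\<in>T1 \<times> T2. 0 < lam t"
    and lam_prod: "\<forall>t1\<in>T1. \<forall>t2\<in>T2. lam (t1, t2) = marg1 T2 lam t1 * marg2 T1 lam t2"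
    and "implementable K T1 T2 lam Q1 Q2"
  shows "\<exists>m. mass_plan K T1 T2 lam (\<lambda>k t1. Q1 k t1 * marg1 T2 lam t1) (\<lambda>k t2. Q2 k t2 * marg2 T1 lam t2) m"
proof -
  obtain q where q: "feasible_ex_post K T1 T2 q"
    and Q1: "\<forall>k\<in>K. \<forall>t1\<in>T1. Q1 k t1 = (\<Sum>t2\<in>T2. q k (t1, t2) * marg2 T1 lam t2)"
    and Q2: "\<forall>k\<in>K. \<forall>t2\<in>T2. Q2 k t2 = (\<Sum>t1\<in>T1. q k (t1, t2) * marg1 T2 lam t1)"
    using assms(3) unfolding implementable_def by blast
  have "mass_plan K T1 T2 lam (\<lambda>k t1. Q1 k t1 * marg1 T2 lam t1) (\<lambda>k t2. Q2 k t2 * marg2 T1 lam t2)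
      (\<lambda>k t. q k t * lam t)"
    unfolding mass_plan_def
  proof (intro conjI ballI)
    fix k t assume "k \<in> K" "t \<in> T1 \<times> T2"
    then show "0 \<le> q k t * lam t"
      using q lam_pos unfolding feasible_ex_post_def by (meson less_imp_le mult_nonneg_nonneg)
  next
    fix t assume "t \<in> T1 \<times> T2"
    then have "(\<Sum>k\<in>K. q k t) = 1"
      using q unfolding feasible_ex_post_def by blast
    then show "(\<Sum>k\<in>K. q k t * lam t) = lam t"
      by (simp flip: sum_distrib_right)
  next
    fix k t1 assume "k \<in> K" "t1 \<in> T1"
    then show "(\<Sum>t2\<in>T2. q k (t1, t2) * lam (t1, t2)) = Q1 k t1 * marg1 T2 lam t1"
      using interim_mass1[OF lam_prod, of t1 "q k"] Q1 by simp
  next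
    fix k t2 assume "k \<in> K" "t2 \<in> T2"
    then show "(\<Sum>t1\<in>T1. q k (t1, t2) * lam (t1, t2)) = Q2 k t2 * marg2 T1 lam t2"
      using interim_mass2[OF lam_prod, of t2 "q k"] Q2 by simp
  qed
  then show ?thesis by blast
qed

lemma mass_plan_imp_implementable:
  assumes "finite T1" "finite T2" "T1 \<noteq> {}" "T2 \<noteq> {}"
    and lam_pos: "\<forall>t\<in>T1 \<times> T2. 0 < lam t"
    and lam_prod: "\<forall>t1\<in>T1. \<forall>t2\<in>T2. lam (t1, t2) = marg1 T2 lam t1 * marg2 T1 lam t2"
    and m: "mass_plan K T1 T2 lam (\<lambda>k t1. Q1 k t1 * marg1 T2 lam t1) (\<lambda>k t2. Q2 k t2 * marg2 T1 lam t2) m"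
  shows "implementable K T1 T2 lam Q1 Q2"
proof -
  define q where "q k t = m k t / lam t" for k t
  have m_eq: "m k t = q k t * lam t" if "t \<in> T1 \<times> T2" for k t
  proof -
    have "0 < lam t" using lam_pos that by blast
    then show ?thesis by (simp add: q_def)
  qed
  have "feasible_ex_post K T1 T2 q"
    unfolding feasible_ex_post_def
  proof (intro conjI ballI)
    fix t k assume "t \<in> T1 \<times> T2" "k \<in> K"
    then have "0 \<le> m k t" "0 < lam t"
      using m lam_pos unfolding mass_plan_def by blast+
    then show "0 \<le> q k t" by (simp add: q_def)
  next
    fix t assume "t \<in> T1 \<times> T2"
    then have "(\<Sum>k\<in>K. m k t) = lam t" "0 < lam t"
      using m lam_pos unfolding mass_plan_def by blast+
    then show "(\<Sum>k\<in>K. q k t) = 1" by (simp add: q_def flip: sum_divide_distrib)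
  qed
  moreover have "Q1 k t1 = (\<Sum>t2\<in>T2. q k (t1, t2) * marg2 T1 lam t2)" if "k \<in> K" "t1 \<in> T1" for k t1
  proof -
    have "Q1 k t1 * marg1 T2 lam t1 = (\<Sum>t2\<in>T2. q k (t1, t2) * marg2 T1 lam t2) * marg1 T2 lam t1"
      using m that m_eq interim_mass1[OF lam_prod that(2)] unfolding mass_plan_def by simp
    then show ?thesis
      using marg1_pos[OF assms(2,4) lam_pos that(2)] by simp
  qed
  moreover have "Q2 k t2 = (\<Sum>t1\<in>T1. q k (t1, t2) * marg1 T2 lam t1)" if "k \<in> K" "t2 \<in> T2" for k t2
  proof -
    have "Q2 k t2 * marg2 T1 lam t2 = (\<Sum>t1\<in>T1. q k (t1, t2) * marg1 T2 lam t1) * marg2 T1 lam t2"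
      using m that m_eq interim_mass2[OF lam_prod that(2)] unfolding mass_plan_def by simp
    then show ?thesis
      using marg2_pos[OF assms(1,3) lam_pos that(2)] by simp
  qed
  ultimately show ?thesis
    unfolding implementable_def by blast
qed

lemma interim_nonneg_of_border_ineq:
  assumes "finite T1" "finite T2" "T1 \<noteq> {}" "T2 \<noteq> {}" "\<forall>t\<in>T1 \<times> T2. 0 < lam t"
    and "balanced K T1 T2 (\<lambda>k t1. Q1 k t1 * marg1 T2 lam t1) (\<lambda>k t2. Q2 k t2 * marg2 T1 lam t2)"
    and "border_ineq K T1 T2 lam (\<lambda>k t1. Q1 k t1 * marg1 T2 lam t1) (\<lambda>k t2. Q2 k t2 * marg2 T1 lam t2)"
    and "k \<in> K"
  shows "(\<forall>t1\<in>T1. 0 \<le> Q1 k t1) \<and> (\<forall>t2\<in>T2. 0 \<le> Q2 k t2)"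
proof -
  note x0 = border_ineq_nonneg(1)[OF assms(1,2,6,7,8)] and y0 = border_ineq_nonneg(2)[OF assms(1,2,6,7,8)]
  have "0 \<le> Q1 k t1" if "t1 \<in> T1" for t1
  proof -
    have "0 \<le> Q1 k t1 * marg1 T2 lam t1" using x0 that by simp
    with marg1_pos[OF assms(2,4,5) that] show ?thesis by (simp add: zero_le_mult_iff)
  qed
  moreover have "0 \<le> Q2 k t2" if "t2 \<in> T2" for t2
  proof -
    have "0 \<le> Q2 k t2 * marg2 T1 lam t2" using y0 that by simp
    with marg2_pos[OF assms(1,3,5) that] show ?thesis by (simp add: zero_le_mult_iff)
  qed
  ultimately show ?thesis by blast
qed

lemma balanced_border_ineq_Diff_iff:
  assumes "finite K" "finite T1" "finite T2" "mass_totals K T1 T2 lam x y" "k0 \<in> K"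
  shows "balanced K T1 T2 x y \<and> border_ineq K T1 T2 lam x y \<longleftrightarrow>
    balanced (K - {k0}) T1 T2 x y \<and> border_ineq (K - {k0}) T1 T2 lam x y"
proof
  assume "balanced K T1 T2 x y \<and> border_ineq K T1 T2 lam x y"
  then show "balanced (K - {k0}) T1 T2 x y \<and> border_ineq (K - {k0}) T1 T2 lam x y"
    using border_ineq_mono[of K T1 T2 lam x y "K - {k0}"] unfolding balanced_def by auto
next
  assume "balanced (K - {k0}) T1 T2 x y \<and> border_ineq (K - {k0}) T1 T2 lam x y"
  then have bal: "balanced K T1 T2 x y" and border: "border_ineq (K - {k0}) T1 T2 lam x y"
    using balanced_extend[OF assms(1,4,5)] by auto
  show "balanced K T1 T2 x y \<and> border_ineq K T1 T2 lam x y"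
    using bal border_ineq_extend[OF assms(1-4) bal border] by blast
qed

theorem theorem1:
  fixes K :: "'k set" and k0 :: 'k
    and T1 :: "'a set" and T2 :: "'b set"
    and lam :: "'a \<times> 'b \<Rightarrow> real"
    and Q1 :: "'k \<Rightarrow> 'a \<Rightarrow> real" and Q2 :: "'k \<Rightarrow> 'b \<Rightarrow> real"
  assumes finK: "finite K" and k0K: "k0 \<in> K"
    and finT1: "finite T1" and finT2: "finite T2"
    and min2: "min (card T1) (card T2) = 2"
    and lam_pos: "\<forall>t\<in>T1 \<times> T2. lam t > 0"
    and lam_sum: "(\<Sum>t\<in>T1 \<times> T2. lam t) = 1"
    and lam_prod: "\<forall>t1\<in>T1. \<forall>t2\<in>T2. lam (t1, t2) = marg1 T2 lam t1 * marg2 T1 lam t2"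
    and Q1_sum: "\<forall>t1\<in>T1. (\<Sum>k\<in>K. Q1 k t1) = 1"
    and Q2_sum: "\<forall>t2\<in>T2. (\<Sum>k\<in>K. Q2 k t2) = 1"
  shows "implementable K T1 T2 lam Q1 Q2 \<longleftrightarrow>
    ((\<forall>k\<in>K - {k0}.
        (\<Sum>t1\<in>T1. Q1 k t1 * marg1 T2 lam t1) - (\<Sum>t2\<in>T2. Q2 k t2 * marg2 T1 lam t2) = 0) \<and>
     (\<forall>k\<in>K - {k0}. (\<forall>t1\<in>T1. Q1 k t1 \<ge> 0) \<and> (\<forall>t2\<in>T2. Q2 k t2 \<ge> 0)) \<and>
     (\<forall>G E1 E2. G \<subseteq> K - {k0} \<longrightarrow> E1 \<subseteq> T1 \<longrightarrow> E2 \<subseteq> T2 \<longrightarrow>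
        (\<Sum>k\<in>G. (\<Sum>t1\<in>E1. Q1 k t1 * marg1 T2 lam t1) - (\<Sum>t2\<in>E2. Q2 k t2 * marg2 T1 lam t2))
          \<le> (\<Sum>t\<in>E1 \<times> (T2 - E2). lam t)))"
proof -
  let ?x = "\<lambda>k t1. Q1 k t1 * marg1 T2 lam t1" and ?y = "\<lambda>k t2. Q2 k t2 * marg2 T1 lam t2"
  have "2 \<le> card T1" "2 \<le> card T2"
    using min2 min.cobounded1[of "card T1" "card T2"] min.cobounded2[of "card T1" "card T2"] by simp_all
  then have ne: "T1 \<noteq> {}" "T2 \<noteq> {}" by auto
  have lam_nonneg: "\<forall>t\<in>T1 \<times> T2. 0 \<le> lam t" using lam_pos by (meson less_imp_le)
  have totals: "mass_totals K T1 T2 lam ?x ?y"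
    using Q1_sum Q2_sum by (simp add: mass_totals_def flip: sum_distrib_right)
  have "implementable K T1 T2 lam Q1 Q2 \<longleftrightarrow> (\<exists>m. mass_plan K T1 T2 lam ?x ?y m)"
    using implementable_imp_mass_plan[OF lam_pos lam_prod]
      mass_plan_imp_implementable[OF finT1 finT2 ne lam_pos lam_prod] by blast
  also have "\<dots> \<longleftrightarrow> balanced K T1 T2 ?x ?y \<and> border_ineq K T1 T2 lam ?x ?y"
    by (rule mass_plan_exists_iff[OF finK finT1 finT2 min2 lam_nonneg totals])
  also have "\<dots> \<longleftrightarrow> balanced (K - {k0}) T1 T2 ?x ?y \<and> border_ineq (K - {k0}) T1 T2 lam ?x ?y"
    by (rule balanced_border_ineq_Diff_iff[OF finK finT1 finT2 totals k0K])
  finally have "implementable K T1 T2 lam Q1 Q2 \<longleftrightarrow> balanced (K - {k0}) T1 T2 ?x ?y \<and>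
      (\<forall>k\<in>K - {k0}. (\<forall>t1\<in>T1. 0 \<le> Q1 k t1) \<and> (\<forall>t2\<in>T2. 0 \<le> Q2 k t2)) \<and>
      border_ineq (K - {k0}) T1 T2 lam ?x ?y"
    using interim_nonneg_of_border_ineq[OF finT1 finT2 ne lam_pos, of "K - {k0}" Q1 Q2] by blast
  then show ?thesis
    unfolding balanced_def border_ineq_def by simp
qed

end
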